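(* Let $(\Omega,T)$ be a minimal subshift over a finite alphabet such that no word in $L_5(\Omega)$ has repeated letters. Then for every $w,v\in L(\Omega)$, every $i,j\in\mathbb Z$ and every cylinder partition $C$ of $(w,i)$, the following hold in $G_T'$: $$\left(\sigma_{(w,i)}\right)^3=1,\qquad \left(\sigma_{(w,i)}\,\sigma_{(w,i+1)}\right)^2=1,\qquad \sigma_{(w,i+1)}=\sigma_{(w,i)}\ast\sigma_{(w,i+2)},\qquad \sigma_{(w,i)}=\prod_{(s,k)\in C}\sigma_{(s,k)},$$ and $[\sigma_{(w,i)},\sigma_{(v,j)}]=1$ whenever $(w,i)$ and $(v,j)$ are $3$-disjoint.
   Context: $T$ is the left shift $(T\omega)_m=\omega_{m+1}$ on $A^{\mathbb Z}$, $A$ finite; a minimal subshift is a closed shift-invariant $\Omega\subseteq A^{\mathbb Z}$ with every orbit dense. Words are indexed from $0$; $L_m(\Omega)$ is the set of words of length $m$ occurring in sequences of $\Omega$, $L(\Omega)=\bigcup_mL_m(\Omega)$. For a word $v$ and $i\in\mathbb Z$, $(v,i)=\{\omega\in\Omega:\omega_{k-i}=v_k,\ 0\leq k\leq|v|-1\}$. A cylinder partition of $(w,i)$ is a finite family of cylinder sets $(s,k)$ that are pairwise disjoint with union $(w,i)$. For a clopen $U$ with $U,TU,T^2U$ pairwise disjoint, $\sigma_U(\omega)=T\omega$ on $U\cup TU$, $\sigma_U(\omega)=T^{-2}\omega$ on $T^2U$, $\sigma_U(\omega)=\omega$ elsewhere; $\sigma_{(w,i)}:=\sigma_U$ with $U=(w,i)$.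 $G_T$ is the group of homeomorphisms $S$ of $\Omega$ with $S(x)=T^{f_S(x)}x$ for a continuous $f_S:\Omega\to\mathbb Z$, and $G_T'$ its commutator subgroup (which contains all $\sigma_U$). For group elements $r,s$, $r\ast s:=s\,r^{-1}s^{-1}r$. Clopen sets $U,V$ are $3$-disjoint if $(U\cup TU\cup T^2U)\cap(V\cup TV\cup T^2V)=\emptyset$. *)

theory Defs
  imports "HOL-Analysis.Analysis"
begin

definition fullshift_top :: "(int \<Rightarrow> 'a) topology" where
  "fullshift_top = product_topology (\<lambda>_. discrete_topology UNIV) UNIV"

definition shift :: "(int \<Rightarrow> 'a) \<Rightarrow> (int \<Rightarrow> 'a)" where
  "shift \<omega> = (\<lambda>m. \<omega> (m + 1))"

definition shiftpow :: "int \<Rightarrow> (int \<Rightarrow> 'a) \<Rightarrow> (int \<Rightarrow> 'a)" where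
  "shiftpow n \<omega> = (\<lambda>m. \<omega> (m + n))"

definition minimal_subshift :: "(int \<Rightarrow> 'a::finite) set \<Rightarrow> bool" where
  "minimal_subshift \<Omega> \<longleftrightarrow>
     \<Omega> \<noteq> {} \<and> closedin fullshift_top \<Omega> \<and> shift ` \<Omega> = \<Omega> \<and>
     (\<forall>x\<in>\<Omega>. fullshift_top closure_of (range (\<lambda>n. shiftpow n x)) = \<Omega>)"

definition lang :: "(int \<Rightarrow> 'a) set \<Rightarrow> 'a list set" where
  "lang \<Omega> = {v. \<exists>\<omega>\<in>\<Omega>. \<exists>n::int. \<forall>k<length v. \<omega> (n + int k) = v ! k}"

definition lang_n :: "(int \<Rightarrow> 'a) set \<Rightarrow> nat \<Rightarrow> 'a list set" where
  "lang_n \<Omega> m = {v \<in> lang \<Omega>. length v = m}"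

definition cyl :: "(int \<Rightarrow> 'a) set \<Rightarrow> 'a list \<Rightarrow> int \<Rightarrow> (int \<Rightarrow> 'a) set" where
  "cyl \<Omega> v i = {\<omega>\<in>\<Omega>. \<forall>k<length v. \<omega> (int k - i) = v ! k}"

definition cylinder_partition ::
  "(int \<Rightarrow> 'a) set \<Rightarrow> ('a list \<times> int) list \<Rightarrow> 'a list \<Rightarrow> int \<Rightarrow> bool" where
  "cylinder_partition \<Omega> C w i \<longleftrightarrow>
     (\<forall>p<length C. \<forall>q<length C. p \<noteq> q \<longrightarrow>
        cyl \<Omega> (fst (C!p)) (snd (C!p)) \<inter> cyl \<Omega> (fst (C!q)) (snd (C!q)) = {}) \<and>
     (\<Union>c\<in>set C. cyl \<Omega> (fst c) (snd c)) = cyl \<Omega> w i"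

definition sigma :: "(int \<Rightarrow> 'a) set \<Rightarrow> (int \<Rightarrow> 'a) \<Rightarrow> (int \<Rightarrow> 'a)" where
  "sigma U \<omega> =
     (if \<omega> \<in> U \<union> shift ` U then shift \<omega>
      else if \<omega> \<in> shift ` shift ` U then shiftpow (-2) \<omega>
      else \<omega>)"

definition sigma_cyl :: "(int \<Rightarrow> 'a) set \<Rightarrow> 'a list \<Rightarrow> int \<Rightarrow> (int \<Rightarrow> 'a) \<Rightarrow> (int \<Rightarrow> 'a)" where
  "sigma_cyl \<Omega> w i = sigma (cyl \<Omega> w i)"

definition three_disjoint :: "(int \<Rightarrow> 'a) set \<Rightarrow> (int \<Rightarrow> 'a) set \<Rightarrow> bool" where
  "three_disjoint U V \<longleftrightarrow>
     (U \<union> shift ` U \<union> shift ` shift ` U) \<inter> (V \<union> shift ` V \<union> shift ` shift ` V) = {}"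

definition commutator :: "('b \<Rightarrow> 'b) \<Rightarrow> ('b \<Rightarrow> 'b) \<Rightarrow> ('b \<Rightarrow> 'b)" where
  "commutator r s = r \<circ> s \<circ> inv r \<circ> inv s"

definition star :: "('b \<Rightarrow> 'b) \<Rightarrow> ('b \<Rightarrow> 'b) \<Rightarrow> ('b \<Rightarrow> 'b)" where
  "star r s = s \<circ> inv r \<circ> inv s \<circ> r"

end

theory Submission imports Defs begin

text \<open>If the visits of every orbit to a set \<open>U\<close> are more than two steps apart, then
  \<open>\<sigma>\<^sub>U\<close> cyclically permutes each orbit segment \<open>\<omega>, T\<omega>, T\<^sup>2\<omega>\<close> with \<open>\<omega> \<in> U\<close> and fixes
  everything else, so each identity between such 3-cycles reduces to a finite case
  distinction on where an orbit meets \<open>U\<close> within a window of a few steps. Forbidding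
  repeated letters in words of length 5 makes the visits of every orbit to a cylinder more
  than four steps apart, which leaves enough room for all the identities of the theorem.\<close>

lemma shiftpow_shiftpow [simp]: "shiftpow a (shiftpow b \<omega>) = shiftpow (a + b) \<omega>"
  by (simp add: shiftpow_def ac_simps)

lemma shiftpow_0: "shiftpow 0 \<omega> = \<omega>"
  by (simp add: shiftpow_def)

lemma shift_eq_shiftpow: "shift = shiftpow 1"
  by (simp add: fun_eq_iff shift_def shiftpow_def)

lemma mem_shift_image_iff [simp]: "\<omega> \<in> shift ` U \<longleftrightarrow> shiftpow (-1) \<omega> \<in> U"
proof
  assume "shiftpow (-1) \<omega> \<in> U"
  moreover have "\<omega> = shift (shiftpow (-1) \<omega>)" by (simp add: shift_eq_shiftpow shiftpow_0)
  ultimately show "\<omega> \<in> shift ` U" by blast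
qed (auto simp: shift_eq_shiftpow shiftpow_0)

lemma sigma_shiftpow:
  "sigma U (shiftpow n \<omega>) =
    (if shiftpow n \<omega> \<in> U \<or> shiftpow (n - 1) \<omega> \<in> U then shiftpow (n + 1) \<omega>
     else if shiftpow (n - 2) \<omega> \<in> U then shiftpow (n - 2) \<omega> else shiftpow n \<omega>)"
  unfolding sigma_def Un_iff mem_shift_image_iff
  unfolding shift_eq_shiftpow by (simp add: algebra_simps)

lemma sigma_empty: "sigma {} = id"
  by (simp add: fun_eq_iff sigma_def)

definition orbit_sparse :: "int \<Rightarrow> (int \<Rightarrow> 'a) set \<Rightarrow> bool" where
  "orbit_sparse n U \<longleftrightarrow>
     (\<forall>a b \<omega>. shiftpow a \<omega> \<in> U \<longrightarrow> shiftpow b \<omega> \<in> U \<longrightarrow> a = b \<or> n < \<bar>a - b\<bar>)"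

lemma orbit_sparseD:
  assumes "orbit_sparse n U" "shiftpow a \<omega> \<in> U" "a \<noteq> b" "\<bar>a - b\<bar> \<le> n"
  shows "shiftpow b \<omega> \<notin> U"
  using assms unfolding orbit_sparse_def by force

lemma orbit_sparse_mono: "orbit_sparse n U \<Longrightarrow> m \<le> n \<Longrightarrow> V \<subseteq> U \<Longrightarrow> orbit_sparse m V"
  unfolding orbit_sparse_def by (meson le_less_trans subsetD)

lemma orbit_sparse_shift_image:
  assumes "orbit_sparse n U" shows "orbit_sparse n (shift ` U)"
  unfolding orbit_sparse_def
proof (intro allI impI)
  fix a b \<omega>
  assume "shiftpow a \<omega> \<in> shift ` U" "shiftpow b \<omega> \<in> shift ` U"
  then have "shiftpow (a - 1) \<omega> \<in> U" "shiftpow (b - 1) \<omega> \<in> U" by simp_all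
  then have "a - 1 = b - 1 \<or> n < \<bar>(a - 1) - (b - 1)\<bar>"
    using assms unfolding orbit_sparse_def by blast
  then show "a = b \<or> n < \<bar>a - b\<bar>" by auto
qed

lemma sigma_cube:
  assumes "orbit_sparse 2 U" shows "sigma U \<circ> sigma U \<circ> sigma U = id"
proof
  fix \<omega> :: "int \<Rightarrow> 'a"
  note far = orbit_sparseD[OF assms]
  \<comment> \<open>\<open>\<omega>\<close> is written as \<open>shiftpow 0 \<omega>\<close> so that \<open>sigma_shiftpow\<close> evaluates every iterate.\<close>
  consider "shiftpow 0 \<omega> \<in> U" | "shiftpow (-1) \<omega> \<in> U" | "shiftpow (-2) \<omega> \<in> U"
    | "shiftpow 0 \<omega> \<notin> U" "shiftpow (-1) \<omega> \<notin> U" "shiftpow (-2) \<omega> \<notin> U" by blast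
  then have "(sigma U \<circ> sigma U \<circ> sigma U) (shiftpow 0 \<omega>) = shiftpow 0 \<omega>"
  proof cases
    case 1 then show ?thesis by (simp add: sigma_shiftpow far[OF 1])
  next
    case 2 then show ?thesis by (simp add: sigma_shiftpow far[OF 2])
  next
    case 3 then show ?thesis by (simp add: sigma_shiftpow far[OF 3])
  next
    case 4 then show ?thesis by (simp add: sigma_shiftpow)
  qed
  then show "(sigma U \<circ> sigma U \<circ> sigma U) \<omega> = id \<omega>" by (simp add: shiftpow_0)
qed

lemma inv_eq_square_if_cube_eq_id: "f \<circ> f \<circ> f = id \<Longrightarrow> inv f = f \<circ> f"
  by (rule inv_unique_comp) (simp_all add: o_assoc)

lemma sigma_comp_sigma_shift_involution:
  assumes "orbit_sparse 4 U"
  shows "(sigma U \<circ> sigma (shift ` U)) \<circ> (sigma U \<circ> sigma (shift ` U)) = id"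
proof
  fix \<omega> :: "int \<Rightarrow> 'a"
  note far = orbit_sparseD[OF assms]
  consider "shiftpow 0 \<omega> \<in> U" | "shiftpow (-1) \<omega> \<in> U" | "shiftpow (-2) \<omega> \<in> U"
    | "shiftpow (-3) \<omega> \<in> U"
    | "shiftpow 0 \<omega> \<notin> U" "shiftpow (-1) \<omega> \<notin> U" "shiftpow (-2) \<omega> \<notin> U"
      "shiftpow (-3) \<omega> \<notin> U" by blast
  then have "((sigma U \<circ> sigma (shift ` U)) \<circ> (sigma U \<circ> sigma (shift ` U))) (shiftpow 0 \<omega>)
      = shiftpow 0 \<omega>"
  proof cases
    case 1 then show ?thesis by (simp add: sigma_shiftpow far[OF 1])
  next
    case 2 then show ?thesis by (simp add: sigma_shiftpow far[OF 2])
  next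
    case 3 then show ?thesis by (simp add: sigma_shiftpow far[OF 3])
  next
    case 4 then show ?thesis by (simp add: sigma_shiftpow far[OF 4])
  next
    case 5 then show ?thesis by (simp add: sigma_shiftpow)
  qed
  then show "((sigma U \<circ> sigma (shift ` U)) \<circ> (sigma U \<circ> sigma (shift ` U))) \<omega> = id \<omega>"
    by (simp add: shiftpow_0)
qed

lemma sigma_shift_eq_star:
  assumes "orbit_sparse 4 U"
  shows "sigma (shift ` U) = star (sigma U) (sigma (shift ` shift ` U))"
proof -
  have sparse: "orbit_sparse 2 U" "orbit_sparse 2 (shift ` shift ` U)"
    using orbit_sparse_mono[OF assms] by (simp_all add: orbit_sparse_shift_image)
  note inv_sigma = sparse[THEN sigma_cube, THEN inv_eq_square_if_cube_eq_id]
  show ?thesis unfolding star_def inv_sigma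
  proof
    fix \<omega> :: "int \<Rightarrow> 'a"
    note far = orbit_sparseD[OF assms]
    consider "shiftpow 0 \<omega> \<in> U" | "shiftpow (-1) \<omega> \<in> U" | "shiftpow (-2) \<omega> \<in> U"
      | "shiftpow (-3) \<omega> \<in> U" | "shiftpow (-4) \<omega> \<in> U"
      | "shiftpow 0 \<omega> \<notin> U" "shiftpow (-1) \<omega> \<notin> U" "shiftpow (-2) \<omega> \<notin> U"
        "shiftpow (-3) \<omega> \<notin> U" "shiftpow (-4) \<omega> \<notin> U" by blast
    then have "sigma (shift ` U) (shiftpow 0 \<omega>) =
        (sigma (shift ` shift ` U) \<circ> (sigma U \<circ> sigma U) \<circ>
         (sigma (shift ` shift ` U) \<circ> sigma (shift ` shift ` U)) \<circ> sigma U) (shiftpow 0 \<omega>)"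
    proof cases
      case 1 then show ?thesis by (simp add: sigma_shiftpow far[OF 1])
    next
      case 2 then show ?thesis by (simp add: sigma_shiftpow far[OF 2])
    next
      case 3 then show ?thesis by (simp add: sigma_shiftpow far[OF 3])
    next
      case 4 then show ?thesis by (simp add: sigma_shiftpow far[OF 4])
    next
      case 5 then show ?thesis by (simp add: sigma_shiftpow far[OF 5])
    next
      case 6 then show ?thesis by (simp add: sigma_shiftpow)
    qed
    then show "sigma (shift ` U) \<omega> =
        (sigma (shift ` shift ` U) \<circ> (sigma U \<circ> sigma U) \<circ>
         (sigma (shift ` shift ` U) \<circ> sigma (shift ` shift ` U)) \<circ> sigma U) \<omega>"
      by (simp add: shiftpow_0)
  qed
qed

lemma sigma_comp_sigma_disjoint:
  assumes "orbit_sparse 2 (A \<union> B)" "A \<inter> B = {}"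
  shows "sigma A \<circ> sigma B = sigma (A \<union> B)"
proof
  fix \<omega> :: "int \<Rightarrow> 'a"
  have far: "shiftpow b \<omega> \<notin> A \<and> shiftpow b \<omega> \<notin> B"
    if "shiftpow a \<omega> \<in> A \<union> B" "a \<noteq> b" "\<bar>a - b\<bar> \<le> 2" for a b
    using orbit_sparseD[OF assms(1) that] by blast
  note far_A = far[OF UnI1] and far_B = far[OF UnI2]
  have A_not_B: "x \<notin> B" if "x \<in> A" for x using assms(2) that by blast
  have B_not_A: "x \<notin> A" if "x \<in> B" for x using assms(2) that by blast
  consider "shiftpow 0 \<omega> \<in> A" | "shiftpow (-1) \<omega> \<in> A" | "shiftpow (-2) \<omega> \<in> A"
    | "shiftpow 0 \<omega> \<in> B" | "shiftpow (-1) \<omega> \<in> B" | "shiftpow (-2) \<omega> \<in> B"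
    | "shiftpow 0 \<omega> \<notin> A \<union> B" "shiftpow (-1) \<omega> \<notin> A \<union> B" "shiftpow (-2) \<omega> \<notin> A \<union> B"
    by blast
  then have "(sigma A \<circ> sigma B) (shiftpow 0 \<omega>) = sigma (A \<union> B) (shiftpow 0 \<omega>)"
  proof cases
    case 1 then show ?thesis by (simp add: sigma_shiftpow far_A[OF 1] A_not_B[OF 1])
  next
    case 2 then show ?thesis by (simp add: sigma_shiftpow far_A[OF 2] A_not_B[OF 2])
  next
    case 3 then show ?thesis by (simp add: sigma_shiftpow far_A[OF 3] A_not_B[OF 3])
  next
    case 4 then show ?thesis by (simp add: sigma_shiftpow far_B[OF 4] B_not_A[OF 4])
  next
    case 5 then show ?thesis by (simp add: sigma_shiftpow far_B[OF 5] B_not_A[OF 5])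
  next
    case 6 then show ?thesis by (simp add: sigma_shiftpow far_B[OF 6] B_not_A[OF 6])
  next
    case 7 then show ?thesis by (simp add: sigma_shiftpow)
  qed
  then show "(sigma A \<circ> sigma B) \<omega> = sigma (A \<union> B) \<omega>" by (simp add: shiftpow_0)
qed

lemma foldr_sigma_eq_sigma_Union:
  assumes "orbit_sparse 2 U" "\<forall>A\<in>set L. A \<subseteq> U"
    and "\<forall>p<length L. \<forall>q<length L. p \<noteq> q \<longrightarrow> L ! p \<inter> L ! q = {}"
  shows "foldr (\<circ>) (map sigma L) id = sigma (\<Union>(set L))"
  using assms(2,3)
proof (induction L)
  case Nil
  then show ?case by (simp add: sigma_empty)
next
  case (Cons A L)
  have "\<forall>p<length L. \<forall>q<length L. p \<noteq> q \<longrightarrow> L ! p \<inter> L ! q = {}"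
  proof (intro allI impI)
    fix p q assume "p < length L" "q < length L" "p \<noteq> q"
    then show "L ! p \<inter> L ! q = {}" using Cons.prems(2)[rule_format, of "Suc p" "Suc q"] by simp
  qed
  then have IH: "foldr (\<circ>) (map sigma L) id = sigma (\<Union>(set L))"
    using Cons.prems(1) by (intro Cons.IH) simp_all
  have "A \<inter> \<Union>(set L) = {}"
  proof -
    have "A \<inter> L ! q = {}" if "q < length L" for q
      using Cons.prems(2)[rule_format, of 0 "Suc q"] that by simp
    then show ?thesis by (force simp: in_set_conv_nth)
  qed
  moreover have "orbit_sparse 2 (A \<union> \<Union>(set L))"
    using Cons.prems(1) by (intro orbit_sparse_mono[OF assms(1)]) auto
  ultimately have "sigma A \<circ> sigma (\<Union>(set L)) = sigma (\<Union>(set (A # L)))"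
    by (simp add: sigma_comp_sigma_disjoint)
  moreover have "foldr (\<circ>) (map sigma (A # L)) id = sigma A \<circ> foldr (\<circ>) (map sigma L) id"
    by simp
  ultimately show ?case by (simp only: IH)
qed

lemma three_disjoint_visits_far:
  assumes "three_disjoint U V" "shiftpow a \<omega> \<in> U" "shiftpow b \<omega> \<in> V"
  shows "2 < \<bar>a - b\<bar>"
proof (rule ccontr)
  assume "\<not> 2 < \<bar>a - b\<bar>"
  define c where "c = max a b"
  have window: "shiftpow c \<omega> \<in> X \<union> shift ` X \<union> shift ` shift ` X"
    if "shiftpow d \<omega> \<in> X" "d \<in> {c - 2 .. c}" for d X
  proof -
    have "d = c \<or> d = c - 1 \<or> d = c - 2" using that(2) by auto
    then show ?thesis using that(1) by (auto simp: algebra_simps)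
  qed
  have "c - 2 \<le> a" "c - 2 \<le> b" using \<open>\<not> 2 < \<bar>a - b\<bar>\<close> by (auto simp: c_def)
  then have "shiftpow c \<omega> \<in> (U \<union> shift ` U \<union> shift ` shift ` U) \<inter> (V \<union> shift ` V \<union> shift ` shift ` V)"
    using window[OF assms(2)] window[OF assms(3)] by (simp add: c_def)
  then show False using assms(1) unfolding three_disjoint_def by blast
qed

lemma orbit_sparse_Un_three_disjoint:
  assumes "three_disjoint U V" "orbit_sparse 2 U" "orbit_sparse 2 V"
  shows "orbit_sparse 2 (U \<union> V)"
  unfolding orbit_sparse_def
proof (intro allI impI)
  fix a b \<omega>
  assume "shiftpow a \<omega> \<in> U \<union> V" "shiftpow b \<omega> \<in> U \<union> V"
  then show "a = b \<or> 2 < \<bar>a - b\<bar>"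
  proof (elim UnE)
    assume "shiftpow a \<omega> \<in> U" "shiftpow b \<omega> \<in> U"
    then show ?thesis using assms(2) unfolding orbit_sparse_def by blast
  next
    assume "shiftpow a \<omega> \<in> V" "shiftpow b \<omega> \<in> V"
    then show ?thesis using assms(3) unfolding orbit_sparse_def by blast
  next
    assume "shiftpow a \<omega> \<in> U" "shiftpow b \<omega> \<in> V"
    then show ?thesis using three_disjoint_visits_far[OF assms(1)] by blast
  next
    assume "shiftpow a \<omega> \<in> V" "shiftpow b \<omega> \<in> U"
    then show ?thesis
      using three_disjoint_visits_far[OF assms(1), of b \<omega> a] by (simp add: abs_minus_commute)
  qed
qed

lemma surj_sigma: "orbit_sparse 2 U \<Longrightarrow> surj (sigma U)"
  by (metis sigma_cube comp_apply id_apply surjI)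

lemma commutator_eq_id_if_commute:
  assumes "f \<circ> g = g \<circ> f" "surj f" "surj g"
  shows "commutator f g = id"
proof -
  have "commutator f g = g \<circ> (f \<circ> inv f) \<circ> inv g"
    unfolding commutator_def assms(1) by (simp add: o_assoc)
  also have "\<dots> = id" using assms(2,3) by (simp add: surj_iff)
  finally show ?thesis .
qed

lemma commutator_sigma_three_disjoint:
  assumes "three_disjoint U V" "orbit_sparse 2 U" "orbit_sparse 2 V"
  shows "commutator (sigma U) (sigma V) = id"
proof (rule commutator_eq_id_if_commute)
  have "orbit_sparse 2 (U \<union> V)" "U \<inter> V = {}"
    using orbit_sparse_Un_three_disjoint[OF assms] assms(1) by (auto simp: three_disjoint_def)
  then show "sigma U \<circ> sigma V = sigma V \<circ> sigma U"
    by (metis sigma_comp_sigma_disjoint Un_commute Int_commute)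
qed (use assms(2,3) surj_sigma in auto)

lemma cyl_Suc_index:
  assumes "shift ` \<Omega> = \<Omega>"
  shows "cyl \<Omega> w (i + 1) = shift ` cyl \<Omega> w i"
proof -
  have "\<omega> \<in> cyl \<Omega> w (i + 1) \<longleftrightarrow> shiftpow (-1) \<omega> \<in> cyl \<Omega> w i" for \<omega>
  proof -
    have "\<omega> \<in> \<Omega> \<longleftrightarrow> shiftpow (-1) \<omega> \<in> \<Omega>" using assms mem_shift_image_iff by blast
    then show ?thesis unfolding cyl_def by (simp add: shiftpow_def algebra_simps)
  qed
  then show ?thesis by (simp add: set_eq_iff)
qed

lemma cyl_shiftpow_not_mem:
  assumes "\<forall>u\<in>lang_n \<Omega> 5. distinct u" "w \<noteq> []" "\<eta> \<in> cyl \<Omega> w i" "0 < n" "n \<le> 4"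
  shows "shiftpow n \<eta> \<notin> cyl \<Omega> w i"
proof
  assume "shiftpow n \<eta> \<in> cyl \<Omega> w i"
  moreover have "0 < length w" using assms(2) by simp
  ultimately have "\<eta> (- i + n) = w ! 0" "\<eta> (- i) = w ! 0"
    using assms(3) unfolding cyl_def shiftpow_def by (force simp: algebra_simps)+
  define u where "u = map (\<lambda>k. \<eta> (- i + int k)) [0..<5]"
  have "u \<in> lang \<Omega>"
    using assms(3) unfolding lang_def cyl_def u_def by (intro CollectI bexI[of _ \<eta>] exI[of _ "- i"]) auto
  then have "distinct u" using assms(1) by (simp add: lang_n_def u_def)
  moreover have "nat n < 5" "nat n \<noteq> 0" using assms(4,5) by simp_all
  moreover from this have "u ! nat n = u ! 0"
    using \<open>\<eta> (- i + n) = w ! 0\<close> \<open>\<eta> (- i) = w ! 0\<close> assms(4) by (simp add: u_def)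
  moreover have "length u = 5" by (simp add: u_def)
  ultimately show False by (simp add: nth_eq_iff_index_eq)
qed

lemma orbit_sparse_cyl:
  assumes "\<forall>u\<in>lang_n \<Omega> 5. distinct u" "w \<noteq> []"
  shows "orbit_sparse 4 (cyl \<Omega> w i)"
  unfolding orbit_sparse_def
proof (intro allI impI)
  have far: "4 < b - a"
    if "shiftpow a \<omega> \<in> cyl \<Omega> w i" "shiftpow b \<omega> \<in> cyl \<Omega> w i" "a < b" for a b \<omega>
    using cyl_shiftpow_not_mem[OF assms that(1), of "b - a"] that by force
  fix a b \<omega>
  assume "shiftpow a \<omega> \<in> cyl \<Omega> w i" "shiftpow b \<omega> \<in> cyl \<Omega> w i"
  then show "a = b \<or> 4 < \<bar>a - b\<bar>"
    using far[of a \<omega> b] far[of b \<omega> a] by (cases a b rule: linorder_cases) auto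
qed

lemma sigma_cyl_cylinder_partition:
  assumes "orbit_sparse 2 (cyl \<Omega> w i)" "cylinder_partition \<Omega> C w i"
  shows "sigma_cyl \<Omega> w i = foldr (\<circ>) (map (\<lambda>(s, k). sigma_cyl \<Omega> s k) C) id"
proof -
  define L where "L = map (\<lambda>c. cyl \<Omega> (fst c) (snd c)) C"
  have Union: "\<Union>(set L) = cyl \<Omega> w i"
    using assms(2) unfolding cylinder_partition_def L_def by simp
  have "\<forall>p<length L. \<forall>q<length L. p \<noteq> q \<longrightarrow> L ! p \<inter> L ! q = {}"
    using assms(2) unfolding cylinder_partition_def L_def by simp
  moreover have "\<forall>A\<in>set L. A \<subseteq> cyl \<Omega> w i" using Union by blast
  ultimately have "foldr (\<circ>) (map sigma L) id = sigma (cyl \<Omega> w i)"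
    using foldr_sigma_eq_sigma_Union[OF assms(1)] by (simp only: Union)
  moreover have "map (\<lambda>(s, k). sigma_cyl \<Omega> s k) C = map sigma L"
    unfolding L_def sigma_cyl_def by (simp add: case_prod_beta)
  ultimately show ?thesis by (simp only: sigma_cyl_def)
qed

theorem corollary3p6:
  fixes \<Omega> :: "(int \<Rightarrow> 'a::finite) set"
  assumes "minimal_subshift \<Omega>"
    and "\<forall>u\<in>lang_n \<Omega> 5. distinct u"
  shows "\<forall>w\<in>lang \<Omega>. \<forall>v\<in>lang \<Omega>. \<forall>i j::int. w \<noteq> [] \<longrightarrow> v \<noteq> [] \<longrightarrow>
     sigma_cyl \<Omega> w i \<circ> sigma_cyl \<Omega> w i \<circ> sigma_cyl \<Omega> w i = id \<and>
     (sigma_cyl \<Omega> w i \<circ> sigma_cyl \<Omega> w (i + 1)) \<circ> (sigma_cyl \<Omega> w i \<circ> sigma_cyl \<Omega> w (i + 1)) = id \<and>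
     sigma_cyl \<Omega> w (i + 1) = star (sigma_cyl \<Omega> w i) (sigma_cyl \<Omega> w (i + 2)) \<and>
     (\<forall>C. cylinder_partition \<Omega> C w i \<longrightarrow>
        sigma_cyl \<Omega> w i = foldr (\<circ>) (map (\<lambda>(s, k). sigma_cyl \<Omega> s k) C) id) \<and>
     (three_disjoint (cyl \<Omega> w i) (cyl \<Omega> v j) \<longrightarrow>
        commutator (sigma_cyl \<Omega> w i) (sigma_cyl \<Omega> v j) = id)"
proof (intro ballI allI impI conjI)
  fix w v :: "'a list" and i j :: int
  assume "w \<noteq> []" "v \<noteq> []"
  have invariant: "shift ` \<Omega> = \<Omega>" using assms(1) by (simp add: minimal_subshift_def)
  have shifted: "cyl \<Omega> w (i + 1) = shift ` cyl \<Omega> w i"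
    "cyl \<Omega> w (i + 2) = shift ` shift ` cyl \<Omega> w i"
    using cyl_Suc_index[OF invariant, of w i] cyl_Suc_index[OF invariant, of w "i + 1"]
    by (simp_all add: add.assoc)
  have sparse_w: "orbit_sparse 4 (cyl \<Omega> w i)" "orbit_sparse 2 (cyl \<Omega> w i)"
    using orbit_sparse_cyl[OF assms(2) \<open>w \<noteq> []\<close>] orbit_sparse_mono[of 4 _ 2] by auto
  have sparse_v: "orbit_sparse 2 (cyl \<Omega> v j)"
    using orbit_sparse_cyl[OF assms(2) \<open>v \<noteq> []\<close>] orbit_sparse_mono[of 4 _ 2] by auto
  show "sigma_cyl \<Omega> w i \<circ> sigma_cyl \<Omega> w i \<circ> sigma_cyl \<Omega> w i = id"
    unfolding sigma_cyl_def using sparse_w(2) by (rule sigma_cube)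
  show "(sigma_cyl \<Omega> w i \<circ> sigma_cyl \<Omega> w (i + 1)) \<circ> (sigma_cyl \<Omega> w i \<circ> sigma_cyl \<Omega> w (i + 1)) = id"
    unfolding sigma_cyl_def shifted using sparse_w(1) by (rule sigma_comp_sigma_shift_involution)
  show "sigma_cyl \<Omega> w (i + 1) = star (sigma_cyl \<Omega> w i) (sigma_cyl \<Omega> w (i + 2))"
    unfolding sigma_cyl_def shifted using sparse_w(1) by (rule sigma_shift_eq_star)
  show "commutator (sigma_cyl \<Omega> w i) (sigma_cyl \<Omega> v j) = id"
    if "three_disjoint (cyl \<Omega> w i) (cyl \<Omega> v j)"
    unfolding sigma_cyl_def using that sparse_w(2) sparse_v by (rule commutator_sigma_three_disjoint)
  show "sigma_cyl \<Omega> w i = foldr (\<circ>) (map (\<lambda>(s, k). sigma_cyl \<Omega> s k) C) id"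
    if "cylinder_partition \<Omega> C w i" for C
    using sparse_w(2) that by (rule sigma_cyl_cylinder_partition)
qed

end
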